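(* Let $N\ge1$, $S_1,\dots,S_N\ge1$, and consider an $S_1\times\cdots\times S_N$-setting $N$-partite correlation experiment with joint distributions $P_s$ on $\Lambda_1^{(s_1)}\times\cdots\times\Lambda_N^{(s_N)}$ for $s=(s_1,\dots,s_N)$, admitting an LHV model. Then for any real coefficients $\gamma_s^{(q_s)}$ and any events $D_s^{(q_s)}\subseteq\Lambda_1^{(s_1)}\times\cdots\times\Lambda_N^{(s_N)}$, $q_s=1,\dots,Q_s$, observed under the joint measurement $s$, the tight linear LHV constraint $$\inf_{\lambda_1\in\Lambda_1,\dots,\lambda_N\in\Lambda_N}\sum_{q_s,\,s}\gamma_s^{(q_s)}\chi_{D_s^{(q_s)}}(\lambda_1^{(s_1)},\dots,\lambda_N^{(s_N)})\le\sum_{q_s,\,s}\gamma_s^{(q_s)}P_s(D_s^{(q_s)})\le\sup_{\lambda_1\in\Lambda_1,\dots,\lambda_N\in\Lambda_N}\sum_{q_s,\,s}\gamma_s^{(q_s)}\chi_{D_s^{(q_s)}}(\lambda_1^{(s_1)},\dots,\lambda_N^{(s_N)})$$ holds, where $\lambda_n=(\lambda_n^{(1)},\dots,\lambda_n^{(S_n)})$ and $\Lambda_n=\Lambda_n^{(1)}\times\cdots\times\Lambda_n^{(S_n)}$.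
   Context: Party $n$ performs measurements $s_n\in\{1,\dots,S_n\}$ with outcomes in a measurable space $\Lambda_n^{(s_n)}$. $\chi_D$ is the indicator function of $D$. The sum runs over all joint settings $s$ and all $q_s=1,\dots,Q_s$. The experiment admitting an LHV model is characterized by the existence of a probability measure on $\Lambda_1\times\cdots\times\Lambda_N$ having every $P_s$ as the marginal on coordinates $(\lambda_1^{(s_1)},\dots,\lambda_N^{(s_N)})$. A linear LHV constraint is tight if, within the class of experiments with the given outcome sets admitting an LHV model, its bounds cannot be improved. *)

theory Defs
  imports "HOL-Probability.Probability"
begin

text \<open>Parties are indexed by n < N, settings of party n by k < S n
  (0-based). The outcome space of party n under setting k is the measurable
  space Lam n k.\<close>

definition settings :: "nat \<Rightarrow> (nat \<Rightarrow> nat) \<Rightarrow> (nat \<Rightarrow> nat) set" where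
  "settings N S = PiE {..<N} (\<lambda>n. {..<S n})"

definition joint_space :: "nat \<Rightarrow> (nat \<Rightarrow> nat \<Rightarrow> 'a measure) \<Rightarrow> (nat \<Rightarrow> nat)
    \<Rightarrow> (nat \<Rightarrow> 'a) measure" where
  "joint_space N Lam s = PiM {..<N} (\<lambda>n. Lam n (s n))"

definition hidden_space :: "nat \<Rightarrow> (nat \<Rightarrow> nat) \<Rightarrow> (nat \<Rightarrow> nat \<Rightarrow> 'a measure)
    \<Rightarrow> (nat \<Rightarrow> nat \<Rightarrow> 'a) measure" where
  "hidden_space N S Lam = PiM {..<N} (\<lambda>n. PiM {..<S n} (\<lambda>k. Lam n k))"

definition obs :: "nat \<Rightarrow> (nat \<Rightarrow> nat) \<Rightarrow> (nat \<Rightarrow> nat \<Rightarrow> 'a) \<Rightarrow> (nat \<Rightarrow> 'a)" where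
  "obs N s l = (\<lambda>n\<in>{..<N}. l n (s n))"

definition corr_experiment where
  "corr_experiment N S Lam P \<longleftrightarrow>
     (\<forall>s\<in>settings N S. prob_space (P s) \<and> sets (P s) = sets (joint_space N Lam s))"

definition admits_LHV where
  "admits_LHV N S Lam P \<longleftrightarrow> corr_experiment N S Lam P \<and>
     (\<exists>\<mu>. prob_space \<mu> \<and> sets \<mu> = sets (hidden_space N S Lam) \<and>
        (\<forall>s\<in>settings N S. P s = distr \<mu> (joint_space N Lam s) (obs N s)))"

definition lin_value where
  "lin_value N S Q \<gamma> D P =
     (\<Sum>s\<in>settings N S. \<Sum>q<Q s. \<gamma> s q * measure (P s) (D s q))"

definition lin_fun where
  "lin_fun N S Q \<gamma> D l =
     (\<Sum>s\<in>settings N S. \<Sum>q<Q s. \<gamma> s q * indicator (D s q) (obs N s l))"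

end

theory Submission
  imports Defs
begin

text \<open>Under an LHV model with hidden distribution \<mu>, the value of a linear constraint is the
  \<mu>-integral of the bounded function lin_fun on the hidden space, so it lies between the
  infimum and the supremum of that function. Conversely the Dirac measure at any hidden point is
  itself an LHV model, whose value is the function at that point; hence the two bounds are exactly
  the infimum and the supremum of all values attainable by LHV models, i.e. they are tight.\<close>

lemma measurable_obs:
  assumes "s \<in> settings N S"
  shows "obs N s \<in> hidden_space N S Lam \<rightarrow>\<^sub>M joint_space N Lam s"
  unfolding obs_def joint_space_def
proof (rule measurable_restrict)
  fix n assume n: "n \<in> {..<N}"
  then have "s n \<in> {..<S n}" using assms by (auto simp: settings_def)
  then have "(\<lambda>x. x (s n)) \<in> PiM {..<S n} (Lam n) \<rightarrow>\<^sub>M Lam n (s n)"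
    by (rule measurable_component_singleton)
  moreover have "(\<lambda>l. l n) \<in> hidden_space N S Lam \<rightarrow>\<^sub>M PiM {..<S n} (Lam n)"
    unfolding hidden_space_def using n by (rule measurable_component_singleton)
  ultimately show "(\<lambda>l. l n (s n)) \<in> hidden_space N S Lam \<rightarrow>\<^sub>M Lam n (s n)"
    by (rule measurable_compose[rotated])
qed

lemma indicator_obs_measurable:
  assumes "s \<in> settings N S" "A \<in> sets (joint_space N Lam s)"
  shows "(\<lambda>l. indicator A (obs N s l) :: real) \<in> borel_measurable (hidden_space N S Lam)"
  using measurable_obs[OF assms(1)] assms(2) by (intro measurable_compose[OF _ borel_measurable_indicator])

lemma lin_fun_measurable:
  fixes \<gamma> :: "(nat \<Rightarrow> nat) \<Rightarrow> nat \<Rightarrow> real"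
  assumes "\<forall>s\<in>settings N S. \<forall>q<Q s. D s q \<in> sets (joint_space N Lam s)"
  shows "lin_fun N S Q \<gamma> D \<in> borel_measurable (hidden_space N S Lam)"
  unfolding lin_fun_def
proof (intro borel_measurable_sum borel_measurable_times borel_measurable_const)
  fix s q assume "s \<in> settings N S" "q \<in> {..<Q s}"
  with assms show "(\<lambda>l. indicator (D s q) (obs N s l) :: real) \<in> borel_measurable (hidden_space N S Lam)"
    by (intro indicator_obs_measurable) auto
qed

lemma abs_lin_fun_le:
  fixes \<gamma> :: "(nat \<Rightarrow> nat) \<Rightarrow> nat \<Rightarrow> real"
  shows "\<bar>lin_fun N S Q \<gamma> D l\<bar> \<le> (\<Sum>s\<in>settings N S. \<Sum>q<Q s. \<bar>\<gamma> s q\<bar>)"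
proof -
  have "\<bar>\<gamma> s q * indicator (D s q) (obs N s l)\<bar> \<le> \<bar>\<gamma> s q\<bar>" for s q
    by (simp add: abs_mult indicator_def)
  then show ?thesis
    unfolding lin_fun_def by (intro order.trans[OF sum_abs sum_mono])
qed

lemma
  fixes \<gamma> :: "(nat \<Rightarrow> nat) \<Rightarrow> nat \<Rightarrow> real"
  shows bdd_below_lin_fun: "bdd_below (lin_fun N S Q \<gamma> D ` A)"
    and bdd_above_lin_fun: "bdd_above (lin_fun N S Q \<gamma> D ` A)"
proof -
  let ?B = "\<Sum>s\<in>settings N S. \<Sum>q<Q s. \<bar>\<gamma> s q\<bar>"
  have bounds: "- ?B \<le> lin_fun N S Q \<gamma> D l" "lin_fun N S Q \<gamma> D l \<le> ?B" for l
    using abs_lin_fun_le[of N S Q \<gamma> D l] by auto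
  show "bdd_below (lin_fun N S Q \<gamma> D ` A)" by (rule bdd_belowI2) (rule bounds(1))
  show "bdd_above (lin_fun N S Q \<gamma> D ` A)" by (rule bdd_aboveI2) (rule bounds(2))
qed

lemma (in prob_space) INF_le_integral:
  fixes f :: "'a \<Rightarrow> real"
  assumes "integrable M f" "bdd_below (f ` space M)"
  shows "(INF x\<in>space M. f x) \<le> integral\<^sup>L M f"
proof (rule integral_ge_const)
  show "AE x in M. (INF x\<in>space M. f x) \<le> f x"
    using assms(2) by (intro AE_I2 cINF_lower)
qed (rule assms(1))

lemma (in prob_space) integral_le_SUP:
  fixes f :: "'a \<Rightarrow> real"
  assumes "integrable M f" "bdd_above (f ` space M)"
  shows "integral\<^sup>L M f \<le> (SUP x\<in>space M. f x)"
proof (rule integral_le_const)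
  show "AE x in M. f x \<le> (SUP x\<in>space M. f x)"
    using assms(2) by (intro AE_I2 cSUP_upper)
qed (rule assms(1))

lemma cInf_eq_cInf_subset:
  fixes B :: "'a :: conditionally_complete_lattice set"
  assumes "B \<noteq> {}" "bdd_below B" "B \<subseteq> V" "\<forall>v\<in>V. Inf B \<le> v"
  shows "Inf V = Inf B"
proof (rule antisym)
  have "bdd_below V"
    using assms(4) unfolding bdd_below_def by blast
  with assms(1,3) show "Inf V \<le> Inf B"
    by (intro cInf_superset_mono)
  show "Inf B \<le> Inf V"
    using assms(1,3,4) by (intro cInf_greatest) auto
qed

lemma cSup_eq_cSup_subset:
  fixes B :: "'a :: conditionally_complete_lattice set"
  assumes "B \<noteq> {}" "bdd_above B" "B \<subseteq> V" "\<forall>v\<in>V. v \<le> Sup B"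
  shows "Sup V = Sup B"
proof (rule antisym)
  show "Sup V \<le> Sup B"
    using assms(1,3,4) by (intro cSup_least) auto
  have "bdd_above V"
    using assms(4) unfolding bdd_above_def by blast
  with assms(1,3) show "Sup B \<le> Sup V"
    by (intro cSup_subset_mono)
qed

lemma measure_distr_obs:
  assumes "sets \<mu> = sets (hidden_space N S Lam)" "finite_measure \<mu>"
    and "s \<in> settings N S" "A \<in> sets (joint_space N Lam s)"
  shows "measure (distr \<mu> (joint_space N Lam s) (obs N s)) A = (\<integral>l. indicator A (obs N s l) \<partial>\<mu>)"
proof -
  have obs: "obs N s \<in> \<mu> \<rightarrow>\<^sub>M joint_space N Lam s"
    using measurable_obs[OF assms(3)] by (simp add: measurable_cong_sets[OF assms(1) refl])
  interpret finite_measure "distr \<mu> (joint_space N Lam s) (obs N s)"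
    using assms(2) by (rule finite_measure.finite_measure_distr[OF _ obs])
  have "measure (distr \<mu> (joint_space N Lam s) (obs N s)) A
      = (\<integral>x. indicator A x \<partial>distr \<mu> (joint_space N Lam s) (obs N s))"
    using assms(4) by simp
  also have "\<dots> = (\<integral>l. indicator A (obs N s l) \<partial>\<mu>)"
    using obs assms(4) by (intro integral_distr borel_measurable_indicator)
  finally show ?thesis .
qed

lemma lin_value_eq_integral:
  fixes \<gamma> :: "(nat \<Rightarrow> nat) \<Rightarrow> nat \<Rightarrow> real"
  assumes "prob_space \<mu>" "sets \<mu> = sets (hidden_space N S Lam)"
    and "\<forall>s\<in>settings N S. P s = distr \<mu> (joint_space N Lam s) (obs N s)"
    and D: "\<forall>s\<in>settings N S. \<forall>q<Q s. D s q \<in> sets (joint_space N Lam s)"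
  shows "lin_value N S Q \<gamma> D P = integral\<^sup>L \<mu> (lin_fun N S Q \<gamma> D)"
proof -
  interpret prob_space \<mu> by fact
  have integrable: "integrable \<mu> (\<lambda>l. indicator (D s q) (obs N s l) :: real)"
    if "s \<in> settings N S" "q < Q s" for s q
  proof (rule integrable_const_bound[where B=1])
    show "(\<lambda>l. indicator (D s q) (obs N s l) :: real) \<in> borel_measurable \<mu>"
      using indicator_obs_measurable[OF that(1)] D that measurable_cong_sets[OF assms(2) refl]
      by blast
  qed simp
  have "lin_value N S Q \<gamma> D P =
      (\<Sum>s\<in>settings N S. \<Sum>q<Q s. \<gamma> s q * (\<integral>l. indicator (D s q) (obs N s l) \<partial>\<mu>))"
    unfolding lin_value_def using assms(2,3) D
    by (intro sum.cong refl) (simp add: measure_distr_obs)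
  also have "\<dots> = (\<Sum>s\<in>settings N S. \<Sum>q<Q s. \<integral>l. \<gamma> s q * indicator (D s q) (obs N s l) \<partial>\<mu>)"
    by simp
  also have "\<dots> = (\<Sum>s\<in>settings N S. \<integral>l. (\<Sum>q<Q s. \<gamma> s q * indicator (D s q) (obs N s l)) \<partial>\<mu>)"
    using integrable by (intro sum.cong refl Bochner_Integration.integral_sum[symmetric]) auto
  also have "\<dots> = integral\<^sup>L \<mu> (lin_fun N S Q \<gamma> D)"
  proof -
    have "integrable \<mu> (\<lambda>l. \<Sum>q<Q s. \<gamma> s q * indicator (D s q) (obs N s l))"
      if "s \<in> settings N S" for s
      using that by (intro Bochner_Integration.integrable_sum integrable_mult_right integrable) auto
    then show ?thesis
      unfolding lin_fun_def by (rule Bochner_Integration.integral_sum[symmetric])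
  qed
  finally show ?thesis .
qed

lemma admits_LHV_hidden_space_nonempty:
  assumes "admits_LHV N S Lam P"
  shows "space (hidden_space N S Lam) \<noteq> {}"
proof -
  obtain \<mu> where "prob_space \<mu>" "sets \<mu> = sets (hidden_space N S Lam)"
    using assms unfolding admits_LHV_def by blast
  then show ?thesis by (metis prob_space.not_empty sets_eq_imp_space_eq)
qed

lemma lin_value_bounds:
  fixes \<gamma> :: "(nat \<Rightarrow> nat) \<Rightarrow> nat \<Rightarrow> real"
  assumes "admits_LHV N S Lam P"
    and D: "\<forall>s\<in>settings N S. \<forall>q<Q s. D s q \<in> sets (joint_space N Lam s)"
  shows "(INF l\<in>space (hidden_space N S Lam). lin_fun N S Q \<gamma> D l) \<le> lin_value N S Q \<gamma> D P"
    and "lin_value N S Q \<gamma> D P \<le> (SUP l\<in>space (hidden_space N S Lam). lin_fun N S Q \<gamma> D l)"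
proof -
  obtain \<mu> where \<mu>: "prob_space \<mu>" "sets \<mu> = sets (hidden_space N S Lam)"
    and P: "\<forall>s\<in>settings N S. P s = distr \<mu> (joint_space N Lam s) (obs N s)"
    using assms(1) unfolding admits_LHV_def by blast
  interpret prob_space \<mu> by fact
  have space: "space \<mu> = space (hidden_space N S Lam)"
    using \<mu>(2) by (rule sets_eq_imp_space_eq)
  have "lin_fun N S Q \<gamma> D \<in> borel_measurable \<mu>"
    using lin_fun_measurable[OF D] measurable_cong_sets[OF \<mu>(2) refl] by blast
  then have integrable: "integrable \<mu> (lin_fun N S Q \<gamma> D)"
    by (intro integrable_const_bound[where B="\<Sum>s\<in>settings N S. \<Sum>q<Q s. \<bar>\<gamma> s q\<bar>"])
      (simp_all add: abs_lin_fun_le)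
  have lin_value_eq: "lin_value N S Q \<gamma> D P = integral\<^sup>L \<mu> (lin_fun N S Q \<gamma> D)"
    by (rule lin_value_eq_integral[OF \<mu> P D])
  show "(INF l\<in>space (hidden_space N S Lam). lin_fun N S Q \<gamma> D l) \<le> lin_value N S Q \<gamma> D P"
    using INF_le_integral[OF integrable bdd_below_lin_fun] by (simp add: lin_value_eq space)
  show "lin_value N S Q \<gamma> D P \<le> (SUP l\<in>space (hidden_space N S Lam). lin_fun N S Q \<gamma> D l)"
    using integral_le_SUP[OF integrable bdd_above_lin_fun] by (simp add: lin_value_eq space)
qed

lemma admits_LHV_distr:
  assumes "prob_space \<mu>" "sets \<mu> = sets (hidden_space N S Lam)"
  shows "admits_LHV N S Lam (\<lambda>s. distr \<mu> (joint_space N Lam s) (obs N s))"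
  unfolding admits_LHV_def corr_experiment_def
proof (intro conjI ballI exI[of _ \<mu>])
  fix s assume "s \<in> settings N S"
  then have "obs N s \<in> \<mu> \<rightarrow>\<^sub>M joint_space N Lam s"
    using measurable_obs measurable_cong_sets[OF assms(2) refl] by blast
  then show "prob_space (distr \<mu> (joint_space N Lam s) (obs N s))"
    by (rule prob_space.prob_space_distr[OF assms(1)])
qed (simp_all add: assms)

lemma lin_fun_attained_by_LHV:
  fixes \<gamma> :: "(nat \<Rightarrow> nat) \<Rightarrow> nat \<Rightarrow> real"
  assumes l: "l \<in> space (hidden_space N S Lam)"
    and D: "\<forall>s\<in>settings N S. \<forall>q<Q s. D s q \<in> sets (joint_space N Lam s)"
  shows "\<exists>P. admits_LHV N S Lam P \<and> lin_value N S Q \<gamma> D P = lin_fun N S Q \<gamma> D l"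
proof (intro exI conjI)
  let ?H = "hidden_space N S Lam"
  let ?P = "\<lambda>s. distr (return ?H l) (joint_space N Lam s) (obs N s)"
  show "admits_LHV N S Lam ?P"
    by (rule admits_LHV_distr[OF prob_space_return[OF l] sets_return])
  have "lin_value N S Q \<gamma> D ?P = integral\<^sup>L (return ?H l) (lin_fun N S Q \<gamma> D)"
    by (rule lin_value_eq_integral[OF prob_space_return[OF l] sets_return _ D]) simp
  also have "\<dots> = lin_fun N S Q \<gamma> D l"
    by (rule integral_return[OF l lin_fun_measurable[OF D]])
  finally show "lin_value N S Q \<gamma> D ?P = lin_fun N S Q \<gamma> D l" .
qed

theorem corollary4:
  fixes N :: nat and S :: "nat \<Rightarrow> nat" and Lam :: "nat \<Rightarrow> nat \<Rightarrow> 'a measure"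
    and P :: "(nat \<Rightarrow> nat) \<Rightarrow> (nat \<Rightarrow> 'a) measure"
    and Q :: "(nat \<Rightarrow> nat) \<Rightarrow> nat" and \<gamma> :: "(nat \<Rightarrow> nat) \<Rightarrow> nat \<Rightarrow> real"
    and D :: "(nat \<Rightarrow> nat) \<Rightarrow> nat \<Rightarrow> (nat \<Rightarrow> 'a) set"
  assumes "N \<ge> 1"
    and "\<forall>n<N. S n \<ge> 1"
    and "admits_LHV N S Lam P"
    and "\<forall>s\<in>settings N S. \<forall>q<Q s. D s q \<in> sets (joint_space N Lam s)"
  shows "(INF l\<in>space (hidden_space N S Lam). lin_fun N S Q \<gamma> D l) \<le> lin_value N S Q \<gamma> D P
       \<and> lin_value N S Q \<gamma> D P \<le> (SUP l\<in>space (hidden_space N S Lam). lin_fun N S Q \<gamma> D l)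
       \<and> (INF l\<in>space (hidden_space N S Lam). lin_fun N S Q \<gamma> D l)
           = Inf {lin_value N S Q \<gamma> D P' | P'. admits_LHV N S Lam P'}
       \<and> (SUP l\<in>space (hidden_space N S Lam). lin_fun N S Q \<gamma> D l)
           = Sup {lin_value N S Q \<gamma> D P' | P'. admits_LHV N S Lam P'}"
proof -
  let ?H = "hidden_space N S Lam"
  let ?V = "{lin_value N S Q \<gamma> D P' | P'. admits_LHV N S Lam P'}"
  have attained: "lin_fun N S Q \<gamma> D ` space ?H \<subseteq> ?V"
  proof
    fix v assume "v \<in> lin_fun N S Q \<gamma> D ` space ?H"
    then obtain l where "l \<in> space ?H" "v = lin_fun N S Q \<gamma> D l" by blast
    then obtain P' where "admits_LHV N S Lam P'" "lin_value N S Q \<gamma> D P' = v"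
      using lin_fun_attained_by_LHV[OF _ assms(4), where \<gamma>=\<gamma>] by blast
    then show "v \<in> ?V" by blast
  qed
  have ne: "lin_fun N S Q \<gamma> D ` space ?H \<noteq> {}"
    using admits_LHV_hidden_space_nonempty[OF assms(3)] by simp
  have lower: "\<forall>v\<in>?V. (INF l\<in>space ?H. lin_fun N S Q \<gamma> D l) \<le> v"
    using lin_value_bounds(1)[OF _ assms(4), where \<gamma>=\<gamma>] by blast
  have upper: "\<forall>v\<in>?V. v \<le> (SUP l\<in>space ?H. lin_fun N S Q \<gamma> D l)"
    using lin_value_bounds(2)[OF _ assms(4), where \<gamma>=\<gamma>] by blast
  show ?thesis
  proof (intro conjI)
    show "(INF l\<in>space ?H. lin_fun N S Q \<gamma> D l) = Inf ?V"
      by (rule cInf_eq_cInf_subset[OF ne bdd_below_lin_fun attained lower, symmetric])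
    show "(SUP l\<in>space ?H. lin_fun N S Q \<gamma> D l) = Sup ?V"
      by (rule cSup_eq_cSup_subset[OF ne bdd_above_lin_fun attained upper, symmetric])
  qed (rule lin_value_bounds[OF assms(3,4)])+
qed

end
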